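(* Let $\mathcal{L}=(n,\mathcal{M},\mathcal{C})$ be a simple linearization and let $\mathcal{T}\subseteq\mathcal{P}$. Suppose $D(\mathcal{L})$ has a subgraph $Z$ with $|U(Z)|>1$ satisfying: (a) its underlying undirected graph is a cycle; (b) $V(Z)\subseteq\mathrm{succ}(\mathcal{T})$; (c) for all $s\in\mathcal{S}$, $t\in\mathcal{T}$ there is at most one directed $t$-$s$-path in $D(\mathcal{L})$; (d) $|\mathrm{pred}(s)\cap L(Z)|\le1$ for all $s\in\mathcal{S}$; (e) $|\mathrm{succ}(t)\cap U(Z)|\le1$ for all $t\in\mathcal{T}$. Then $\mathrm{proj}_{\mathcal{S}\cup\mathcal{T}}(P(\mathcal{L}))$ is not integral.
   Context: $[n]=\{1,\dots,n\}$; a monomial is a nonempty subset of $[n]$; $\mathcal{S}=\{\{i\}:i\in[n]\}$. A linearization is a triple $\mathcal{L}=(n,\mathcal{M},\mathcal{C})$, where $\mathcal{M}$ is a set of monomials with $\mathcal{S}\subseteq\mathcal{M}$ and $\mathcal{C}$ is a set of AND-constraints; each AND-constraint is a set $c\subseteq\mathcal{M}$ whose union $\bigcup c$ (resultant) lies in $\mathcal{M}$. $\mathcal{P}=\mathcal{M}\setminus\mathcal{S}$. Linearizations are consistent: each $m\in\mathcal{P}$ is the resultant of some $c$ with $|m'|<|m|$ for all $m'\in c$. $\mathcal{L}$ is simple if each proper monomial is the resultant of exactly one AND-constraint and $|\mathcal{C}|=|\mathcal{P}|$. $P(\mathcal{L})\subseteq\mathbb{R}^{\mathcal{M}}$ is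 the set of $y$ with $0\le y_m\le1$ ($m\in\mathcal{M}$), $y_{\bigcup c}\le y_m$ ($c\in\mathcal{C}$, $m\in c$), $\sum_{m\in c}y_m\le y_{\bigcup c}+|c|-1$ ($c\in\mathcal{C}$). $D(\mathcal{L})$ has node set $\mathcal{M}$ and, for each $c\in\mathcal{C}$, arcs from $\bigcup c$ to each $m\in c$. Cycles are simple; $V(Z)$ is the node set of $Z$. $\mathrm{succ}(W)$ (resp. $\mathrm{pred}(W)$) is the set of nodes reachable from (resp. which can reach) $W$ by directed paths, including $W$; $\mathrm{succ}(w)=\mathrm{succ}(\{w\})$, $\mathrm{pred}(w)=\mathrm{pred}(\{w\})$. $U(Z)$ (resp. $L(Z)$) is the set of nodes with out-degree (resp. in-degree) at least $2$ in $Z$. $\mathrm{proj}_{\mathcal{M}'}$ is orthogonal projection onto coordinates in $\mathcal{M}'$. *)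

theory Defs
  imports Complex_Main
begin

(* Monomials are sets of variables (nat set); an AND-constraint is a set of monomials. *)
type_synonym monomial = "nat set"
type_synonym andc = "monomial set"

definition singletons :: "nat \<Rightarrow> monomial set" where
  "singletons n = {{i} | i. i \<in> {1..n}}"

definition proper_monos :: "nat \<Rightarrow> monomial set \<Rightarrow> monomial set" where
  "proper_monos n M = M - singletons n"

definition linearization :: "nat \<Rightarrow> monomial set \<Rightarrow> andc set \<Rightarrow> bool" where
  "linearization n M C \<longleftrightarrow>
     (\<forall>m\<in>M. m \<noteq> {} \<and> m \<subseteq> {1..n}) \<and>
     singletons n \<subseteq> M \<and>
     (\<forall>c\<in>C. c \<subseteq> M \<and> \<Union>c \<in> M) \<and>
     (\<forall>m\<in>proper_monos n M. \<exists>c\<in>C. \<Union>c = m \<and> (\<forall>m'\<in>c. card m' < card m))"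

definition simple_linearization :: "nat \<Rightarrow> monomial set \<Rightarrow> andc set \<Rightarrow> bool" where
  "simple_linearization n M C \<longleftrightarrow>
     linearization n M C \<and>
     (\<forall>m\<in>proper_monos n M. \<exists>!c. c \<in> C \<and> \<Union>c = m) \<and>
     card C = card (proper_monos n M)"

(* Points of R^M are represented as functions monomial => real vanishing outside M *)
definition polytope_L :: "monomial set \<Rightarrow> andc set \<Rightarrow> (monomial \<Rightarrow> real) set" where
  "polytope_L M C = {y.
     (\<forall>m. m \<notin> M \<longrightarrow> y m = 0) \<and>
     (\<forall>m\<in>M. 0 \<le> y m \<and> y m \<le> 1) \<and>
     (\<forall>c\<in>C. \<forall>m\<in>c. y (\<Union>c) \<le> y m) \<and>
     (\<forall>c\<in>C. (\<Sum>m\<in>c. y m) \<le> y (\<Union>c) + real (card c) - 1)}"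

definition proj :: "monomial set \<Rightarrow> (monomial \<Rightarrow> real) set \<Rightarrow> (monomial \<Rightarrow> real) set" where
  "proj M' Q = (\<lambda>y. \<lambda>m. if m \<in> M' then y m else 0) ` Q"

definition conv_hull :: "('a \<Rightarrow> real) set \<Rightarrow> ('a \<Rightarrow> real) set" where
  "conv_hull X = {x. \<exists>F u. finite F \<and> F \<subseteq> X \<and> F \<noteq> {} \<and> (\<forall>v\<in>F. 0 \<le> u v) \<and>
       (\<Sum>v\<in>F. u v) = 1 \<and> (\<forall>a. x a = (\<Sum>v\<in>F. u v * v a))}"

definition integral_polytope :: "('a \<Rightarrow> real) set \<Rightarrow> bool" where
  "integral_polytope Q \<longleftrightarrow> Q = conv_hull {x\<in>Q. \<forall>a. x a \<in> \<int>}"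

definition arcs_D :: "andc set \<Rightarrow> (monomial \<times> monomial) set" where
  "arcs_D C = {(\<Union>c, m) | c m. c \<in> C \<and> m \<in> c}"

definition succ_set :: "(monomial \<times> monomial) set \<Rightarrow> monomial set \<Rightarrow> monomial set" where
  "succ_set A W = {v. \<exists>w\<in>W. (w, v) \<in> A\<^sup>*}"

definition pred_set :: "(monomial \<times> monomial) set \<Rightarrow> monomial set \<Rightarrow> monomial set" where
  "pred_set A W = {v. \<exists>w\<in>W. (v, w) \<in> A\<^sup>*}"

definition dpath :: "(monomial \<times> monomial) set \<Rightarrow> monomial \<Rightarrow> monomial \<Rightarrow> monomial list \<Rightarrow> bool" where
  "dpath A a b p \<longleftrightarrow> p \<noteq> [] \<and> hd p = a \<and> last p = b \<and> distinct p \<and>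
     (\<forall>i. Suc i < length p \<longrightarrow> (p ! i, p ! Suc i) \<in> A)"

definition undirected_cycle :: "(monomial \<times> monomial) set \<Rightarrow> bool" where
  "undirected_cycle Z \<longleftrightarrow> (\<exists>vs. distinct vs \<and> 3 \<le> length vs \<and>
     (\<forall>i<length vs. (vs ! i, vs ! ((i+1) mod length vs)) \<in> Z \<or>
                    (vs ! ((i+1) mod length vs), vs ! i) \<in> Z) \<and>
     (\<forall>(a,b)\<in>Z. \<exists>i<length vs. {a, b} = {vs ! i, vs ! ((i+1) mod length vs)}))"

definition nodes :: "(monomial \<times> monomial) set \<Rightarrow> monomial set" where
  "nodes Z = Domain Z \<union> Range Z"

definition U_nodes :: "(monomial \<times> monomial) set \<Rightarrow> monomial set" where
  "U_nodes Z = {v. 2 \<le> card {w. (v, w) \<in> Z}}"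

definition L_nodes :: "(monomial \<times> monomial) set \<Rightarrow> monomial set" where
  "L_nodes Z = {v. 2 \<le> card {w. (w, v) \<in> Z}}"

end

(* Let u0 be a U-node of the cycle Z and let W be the set of variables occurring in the
   other U-nodes. Walking around the cycle, any two consecutive U-nodes have a common
   descendant, so the other U-nodes overlap in a connected pattern and both out-neighbours of
   u0 meet W. The point of P(L) that is 0 on the ancestors of u0, 1/2 on the remaining
   monomials meeting W and 1 elsewhere projects to a point that is 1/2 on W, 1/2 on monomials
   t in T above the other U-nodes (by (e) these t do not reach u0) and 0 on some t0 in T above
   u0. In a convex combination of integral points, every point of the support is tight where
   this point is extremal: it is 1 outside W, constant on each other U-node, hence constant
   on W by connectedness, and 0 at t0. Since t0 is 1 as soon as all its variables are, every
   such point vanishes on W, contradicting the value 1/2. *)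

theory Submission
  imports Defs
begin

lemma rtrancl_decreasing:
  assumes "\<forall>(a, b)\<in>R. b \<subseteq> a" and "(a, b) \<in> R\<^sup>*"
  shows "b \<subseteq> a"
  using assms(2) by induction (use assms(1) in fastforce)+

lemma mod_add_left_cancel_nat: "((c::nat) + a) mod N = (c + b) mod N \<longleftrightarrow> a mod N = b mod N"
proof -
  have *: "(c + b) mod N = (c + a) mod N \<longleftrightarrow> b mod N = a mod N" if "a \<le> b" for a b
    using that by (simp add: mod_eq_dvd_iff_nat)
  show ?thesis by (cases "a \<le> b") (use *[of a b] *[of b a] in auto)
qed

lemma card_gt_1_obtains:
  assumes "1 < card A"
  obtains a where "a \<in> A" "A - {a} \<noteq> {}"
proof -
  have "A \<noteq> {}" using assms by auto
  then obtain a where a: "a \<in> A" by blast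
  have "A - {a} \<noteq> {}"
  proof
    assume "A - {a} = {}"
    then have "card A \<le> card {a}" using card_ge_0_finite assms by (intro card_mono) auto
    then show False using assms by simp
  qed
  then show ?thesis using a that by blast
qed

lemma Ints_between_0_1:
  fixes x :: real
  assumes "x \<in> \<int>" and "0 \<le> x" and "x \<le> 1"
  shows "x = 0 \<or> x = 1"
proof -
  obtain k where k: "x = of_int k" using assms(1) by (elim Ints_cases)
  then have "0 \<le> k" "k \<le> 1" using assms(2,3) by simp_all
  then have "k = 0 \<or> k = 1" by presburger
  then show ?thesis using k by auto
qed

lemma sum_le_card_minus_one:
  fixes f :: "'a \<Rightarrow> real"
  assumes "finite c" and "\<forall>m\<in>c. f m \<le> 1" and "a \<in> c"
  shows "(\<Sum>m\<in>c. f m) \<le> real (card c) - 1 + f a"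
proof -
  have "(\<Sum>m\<in>c. f m) = f a + (\<Sum>m\<in>c - {a}. f m)" using assms(1,3) by (rule sum.remove)
  moreover have "(\<Sum>m\<in>c - {a}. f m) \<le> real (card (c - {a})) * 1"
    using assms(2) by (intro sum_bounded_above) auto
  moreover have "Suc (card (c - {a})) = card c" using assms(1,3) by (rule card_Suc_Diff1)
  ultimately show ?thesis by simp
qed

lemma sum_le_card_minus_two:
  fixes f :: "'a \<Rightarrow> real"
  assumes "finite c" and "\<forall>m\<in>c. f m \<le> 1" and "a \<in> c" "b \<in> c" "a \<noteq> b"
  shows "(\<Sum>m\<in>c. f m) \<le> real (card c) - 2 + f a + f b"
proof -
  have "(\<Sum>m\<in>c. f m) = f a + (\<Sum>m\<in>c - {a}. f m)" using assms(1,3) by (rule sum.remove)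
  moreover have "(\<Sum>m\<in>c - {a}. f m) \<le> real (card (c - {a})) - 1 + f b"
    using assms by (intro sum_le_card_minus_one) auto
  moreover have "Suc (card (c - {a})) = card c" using assms(1,3) by (rule card_Suc_Diff1)
  ultimately show ?thesis by simp
qed

lemma convex_comb_tight:
  fixes u f g :: "'a \<Rightarrow> real"
  assumes "finite F" and "\<forall>v\<in>F. 0 \<le> u v" and "\<forall>v\<in>F. f v \<le> g v"
    and "(\<Sum>v\<in>F. u v * f v) = (\<Sum>v\<in>F. u v * g v)"
    and "v \<in> F" and "0 < u v"
  shows "f v = g v"
proof (rule ccontr)
  assume "f v \<noteq> g v"
  then have "u v * f v < u v * g v" using assms(3,5,6) by (simp add: order_less_le)
  moreover have "\<forall>v\<in>F. u v * f v \<le> u v * g v" using assms(2,3) by (simp add: mult_left_mono)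
  ultimately have "(\<Sum>v\<in>F. u v * f v) < (\<Sum>v\<in>F. u v * g v)"
    using assms(1,5) by (intro sum_strict_mono_ex1) auto
  then show False using assms(4) by simp
qed

definition overlap_connected :: "'a set set \<Rightarrow> bool" where
  "overlap_connected \<U> \<longleftrightarrow>
     (\<forall>u\<in>\<U>. \<forall>u'\<in>\<U>. (u, u') \<in> {(v, v'). v \<in> \<U> \<and> v' \<in> \<U> \<and> v \<inter> v' \<noteq> {}}\<^sup>*)"

lemma overlap_connected_const:
  assumes conn: "overlap_connected \<U>" and const: "\<forall>u\<in>\<U>. \<forall>w\<in>u. \<forall>w'\<in>u. f w = f w'"
    and "w \<in> \<Union>\<U>" "w' \<in> \<Union>\<U>"
  shows "f w = f w'"
proof -
  obtain u u' where u: "u \<in> \<U>" "w \<in> u" and u': "u' \<in> \<U>" "w' \<in> u'"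
    using assms(3,4) by blast
  have "(u, u') \<in> {(v, v'). v \<in> \<U> \<and> v' \<in> \<U> \<and> v \<inter> v' \<noteq> {}}\<^sup>*"
    using conn u(1) u'(1) unfolding overlap_connected_def by blast
  then have "u' \<in> \<U> \<and> (\<forall>w'\<in>u'. f w = f w')"
  proof induction
    case base
    then show ?case using u const by blast
  next
    case (step v v')
    then obtain w0 where w0: "w0 \<in> v" "w0 \<in> v'" by blast
    have "f w = f w0" using step.IH w0(1) by blast
    moreover have "\<forall>w'\<in>v'. f w0 = f w'" using step.hyps(2) const w0(2) by blast
    ultimately show ?case using step.hyps(2) by simp
  qed
  then show ?thesis using u' by blast
qed

section \<open>Zigzag sequences\<close>

definition peak :: "('a \<times> 'a) set \<Rightarrow> (nat \<Rightarrow> 'a) \<Rightarrow> nat \<Rightarrow> bool" where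
  "peak R x l \<longleftrightarrow> (x l, x (l - 1)) \<in> R \<and> (x l, x (Suc l)) \<in> R"

text \<open>Without interior peaks the links of the segment point forward up to some index \<open>m\<close>
  and backward after it, so \<open>x m\<close> is reachable from both ends.\<close>

lemma zigzag_common_descendant:
  assumes "i \<le> j"
    and link: "\<forall>l. i \<le> l \<and> l < j \<longrightarrow> (x l, x (Suc l)) \<in> R \<or> (x (Suc l), x l) \<in> R"
    and no_peak: "\<forall>l. i < l \<and> l < j \<longrightarrow> \<not> peak R x l"
  obtains m where "(x i, x m) \<in> R\<^sup>*" "(x j, x m) \<in> R\<^sup>*"
proof -
  have "\<exists>m. i \<le> m \<and> m \<le> j \<and> (x i, x m) \<in> R\<^sup>* \<and> (x j, x m) \<in> R\<^sup>* \<and> (m < j \<longrightarrow> (x j, x (j - 1)) \<in> R)"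
    using \<open>i \<le> j\<close>
  proof (induction j rule: dec_induct)
    case base
    then show ?case by blast
  next
    case (step k)
    then obtain m where m: "i \<le> m" "m \<le> k" "(x i, x m) \<in> R\<^sup>*" "(x k, x m) \<in> R\<^sup>*"
      "m < k \<longrightarrow> (x k, x (k - 1)) \<in> R"
      by blast
    show ?case
    proof (cases "(x (Suc k), x k) \<in> R")
      case True
      have "(x (Suc k), x m) \<in> R\<^sup>*" using converse_rtrancl_into_rtrancl[OF True m(4)] .
      then show ?thesis using m True by (intro exI[of _ m]) auto
    next
      case False
      then have down: "(x k, x (Suc k)) \<in> R" using link step by auto
      have "m = k"
      proof (rule ccontr)
        assume "m \<noteq> k"
        then have "peak R x k" using m down unfolding peak_def by simp
        then show False using no_peak step \<open>m \<noteq> k\<close> m(1,2) by simp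
      qed
      then have "(x i, x (Suc k)) \<in> R\<^sup>*" using m(3) down by simp
      then show ?thesis using step by (intro exI[of _ "Suc k"]) simp
    qed
  qed
  then show ?thesis using that by blast
qed

lemma zigzag_ends_intersect:
  assumes "i \<le> j"
    and "\<forall>l. i \<le> l \<and> l < j \<longrightarrow> (x l, x (Suc l)) \<in> R \<or> (x (Suc l), x l) \<in> R"
    and "\<forall>l. i < l \<and> l < j \<longrightarrow> \<not> peak R x l"
    and dec: "\<forall>(a, b)\<in>R. b \<subseteq> a" and ne: "\<forall>l. x l \<noteq> {}"
  shows "x i \<inter> x j \<noteq> {}"
proof -
  obtain m where "(x i, x m) \<in> R\<^sup>*" "(x j, x m) \<in> R\<^sup>*"
    using zigzag_common_descendant assms(1-3) by blast
  then have "x m \<subseteq> x i \<inter> x j" using rtrancl_decreasing[OF dec] by blast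
  then show ?thesis using ne by blast
qed

lemma zigzag_peaks_overlap_connected:
  assumes link: "\<forall>l. i \<le> l \<and> l < j \<longrightarrow> (x l, x (Suc l)) \<in> R \<or> (x (Suc l), x l) \<in> R"
    and dec: "\<forall>(a, b)\<in>R. b \<subseteq> a" and ne: "\<forall>l. x l \<noteq> {}"
  shows "overlap_connected (x ` {l. i \<le> l \<and> l \<le> j \<and> peak R x l})"
proof -
  define P where "P = {l. i \<le> l \<and> l \<le> j \<and> peak R x l}"
  define ov where "ov = {(v, v'). v \<in> x ` P \<and> v' \<in> x ` P \<and> v \<inter> v' \<noteq> {}}"
  have chain: "(x p, x q) \<in> ov\<^sup>*" if "p \<in> P" "q \<in> P" "p \<le> q" for p q
    using that
  proof (induction q rule: less_induct)
    case (less q)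
    show ?case
    proof (cases "p = q")
      case True
      then show ?thesis by simp
    next
      case False
      define q' where "q' = Max {l \<in> P. l < q}"
      have fin: "finite {l \<in> P. l < q}" by simp
      have p: "p \<in> {l \<in> P. l < q}" using less.prems False by simp
      then have "q' \<in> {l \<in> P. l < q}" unfolding q'_def using Max_in[OF fin] by blast
      then have q': "q' \<in> P" "q' < q" "p \<le> q'" using Max_ge[OF fin p] unfolding q'_def by auto
      have "\<not> peak R x l" if "q' < l" "l < q" for l
      proof
        assume "peak R x l"
        then have "l \<in> {l \<in> P. l < q}" using that q'(1) less.prems(2) unfolding P_def by auto
        then show False using Max_ge[OF fin] that(1) unfolding q'_def by fastforce
      qed
      then have "x q' \<inter> x q \<noteq> {}"
        using zigzag_ends_intersect[of q' q x R] link dec ne q' less.prems(2)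
        unfolding P_def by auto
      then have "(x q', x q) \<in> ov" using q'(1) less.prems(2) unfolding ov_def by blast
      moreover have "(x p, x q') \<in> ov\<^sup>*" using less.IH q' less.prems(1) by blast
      ultimately show ?thesis by simp
    qed
  qed
  have "sym ov" unfolding ov_def sym_def by blast
  then have sym: "sym (ov\<^sup>*)" by (rule sym_rtrancl)
  have "(u, u') \<in> ov\<^sup>*" if u: "u \<in> x ` P" "u' \<in> x ` P" for u u'
  proof -
    obtain p q where "p \<in> P" "q \<in> P" "u = x p" "u' = x q" using u by blast
    then show ?thesis using chain[of p q] chain[of q p] symD[OF sym] by (cases "p \<le> q") auto
  qed
  then show ?thesis unfolding overlap_connected_def ov_def P_def by blast
qed

lemma zigzag_ends_meet_peaks:
  assumes link: "\<forall>l. i \<le> l \<and> l < j \<longrightarrow> (x l, x (Suc l)) \<in> R \<or> (x (Suc l), x l) \<in> R"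
    and dec: "\<forall>(a, b)\<in>R. b \<subseteq> a" and ne: "\<forall>l. x l \<noteq> {}"
    and peaks: "{l. i \<le> l \<and> l \<le> j \<and> peak R x l} \<noteq> {}"
  shows "x i \<inter> \<Union>(x ` {l. i \<le> l \<and> l \<le> j \<and> peak R x l}) \<noteq> {}"
    and "x j \<inter> \<Union>(x ` {l. i \<le> l \<and> l \<le> j \<and> peak R x l}) \<noteq> {}"
proof -
  define P where "P = {l. i \<le> l \<and> l \<le> j \<and> peak R x l}"
  have fin: "finite P" unfolding P_def by (rule finite_subset[of _ "{..j}"]) auto
  have ne_P: "P \<noteq> {}" using peaks unfolding P_def .
  have "x i \<inter> x (Min P) \<noteq> {}"
  proof (rule zigzag_ends_intersect[OF _ _ _ dec ne])
    show "i \<le> Min P" "\<forall>l. i \<le> l \<and> l < Min P \<longrightarrow> (x l, x (Suc l)) \<in> R \<or> (x (Suc l), x l) \<in> R"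
      using Min_in[OF fin ne_P] link unfolding P_def by auto
    have "Min P \<le> j" using Min_in[OF fin ne_P] by (auto simp: P_def)
    show "\<forall>l. i < l \<and> l < Min P \<longrightarrow> \<not> peak R x l"
    proof (intro allI impI notI)
      fix l assume l: "i < l \<and> l < Min P" "peak R x l"
      then have "l \<in> P" using \<open>Min P \<le> j\<close> unfolding P_def by auto
      then show False using Min_le[OF fin] l(1) by fastforce
    qed
  qed
  then show "x i \<inter> \<Union>(x ` P) \<noteq> {}" using Min_in[OF fin ne_P] by blast
  have "x (Max P) \<inter> x j \<noteq> {}"
  proof (rule zigzag_ends_intersect[OF _ _ _ dec ne])
    show "Max P \<le> j" "\<forall>l. Max P \<le> l \<and> l < j \<longrightarrow> (x l, x (Suc l)) \<in> R \<or> (x (Suc l), x l) \<in> R"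
      using Max_in[OF fin ne_P] link unfolding P_def by auto
    have "i \<le> Max P" using Max_in[OF fin ne_P] by (auto simp: P_def)
    show "\<forall>l. Max P < l \<and> l < j \<longrightarrow> \<not> peak R x l"
    proof (intro allI impI notI)
      fix l assume l: "Max P < l \<and> l < j" "peak R x l"
      then have "l \<in> P" using \<open>i \<le> Max P\<close> unfolding P_def by auto
      then show False using Max_ge[OF fin] l(1) by fastforce
    qed
  qed
  then show "x j \<inter> \<Union>(x ` P) \<noteq> {}" using Max_in[OF fin ne_P] by blast
qed

section \<open>Undirected cycles\<close>

text \<open>An \<open>N\<close>-periodic enumeration of the nodes of an undirected cycle; periodicity saves all
  wrap-around case distinctions in the index arithmetic.\<close>

definition cyclic_seq :: "('a \<times> 'a) set \<Rightarrow> nat \<Rightarrow> (nat \<Rightarrow> 'a) \<Rightarrow> bool" where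
  "cyclic_seq Z N x \<longleftrightarrow> 3 \<le> N \<and> (\<forall>l. x l = x (l mod N)) \<and> inj_on x {..<N} \<and>
     (\<forall>l. (x l, x (Suc l)) \<in> Z \<or> (x (Suc l), x l) \<in> Z) \<and>
     (\<forall>(a, b)\<in>Z. \<exists>l. {a, b} = {x l, x (Suc l)})"

lemma cyclic_seq_of_list:
  assumes vs: "distinct vs" "3 \<le> length vs"
    and link: "\<forall>i<length vs. (vs ! i, vs ! ((i + 1) mod length vs)) \<in> Z \<or>
                             (vs ! ((i + 1) mod length vs), vs ! i) \<in> Z"
    and cover: "\<forall>(a, b)\<in>Z. \<exists>i<length vs. {a, b} = {vs ! i, vs ! ((i + 1) mod length vs)}"
    and r: "r < length vs"
  shows "cyclic_seq Z (length vs) (\<lambda>l. vs ! ((r + l) mod length vs))"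
proof -
  define N where "N = length vs"
  define x where "x l = vs ! ((r + l) mod N)" for l
  have N0: "0 < N" using vs(2) unfolding N_def by linarith
  have "cyclic_seq Z N x"
    unfolding cyclic_seq_def
  proof (intro conjI allI)
    show "3 \<le> N" using vs(2) unfolding N_def .
    show "x l = x (l mod N)" for l unfolding x_def by (simp add: mod_add_right_eq)
    show "inj_on x {..<N}"
    proof (rule inj_onI)
      fix a b assume ab: "a \<in> {..<N}" "b \<in> {..<N}" "x a = x b"
      have "(r + a) mod N = (r + b) mod N"
        using N0 ab(3) vs(1) unfolding x_def N_def by (simp add: nth_eq_iff_index_eq)
      then show "a = b" using ab(1,2) by (simp add: mod_add_left_cancel_nat)
    qed
    show "(x l, x (Suc l)) \<in> Z \<or> (x (Suc l), x l) \<in> Z" for l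
      using link[rule_format, of "(r + l) mod N"] N0 unfolding x_def N_def by (simp add: mod_Suc_eq)
    show "\<forall>(a, b)\<in>Z. \<exists>l. {a, b} = {x l, x (Suc l)}"
    proof clarify
      fix a b assume ab: "(a, b) \<in> Z"
      obtain i where i: "i < N" "{a, b} = {vs ! i, vs ! ((i + 1) mod N)}"
        using bspec[OF cover ab] unfolding N_def by auto
      have "x (i + N - r) = vs ! i" "x (Suc (i + N - r)) = vs ! ((i + 1) mod N)"
        using i(1) r unfolding x_def N_def by (simp_all flip: add_Suc)
      then show "\<exists>l. {a, b} = {x l, x (Suc l)}" using i(2) by (intro exI[of _ "i + N - r"]) simp
    qed
  qed
  then show ?thesis unfolding x_def N_def .
qed

lemma undirected_cycle_cyclic_seq:
  assumes "undirected_cycle Z" and "v \<in> nodes Z"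
  obtains N x where "cyclic_seq Z N x" "x 0 = v"
proof -
  obtain vs where vs: "distinct vs" "3 \<le> length vs"
    and link: "\<forall>i<length vs. (vs ! i, vs ! ((i + 1) mod length vs)) \<in> Z \<or>
                             (vs ! ((i + 1) mod length vs), vs ! i) \<in> Z"
    and cover: "\<forall>(a, b)\<in>Z. \<exists>i<length vs. {a, b} = {vs ! i, vs ! ((i + 1) mod length vs)}"
    using assms(1) unfolding undirected_cycle_def by blast
  have "{a, b} \<subseteq> set vs" if ab: "(a, b) \<in> Z" for a b
  proof -
    obtain i where i: "i < length vs" "{a, b} = {vs ! i, vs ! ((i + 1) mod length vs)}"
      using bspec[OF cover ab] by auto
    have "(i + 1) mod length vs < length vs" using vs(2) by (intro mod_less_divisor) linarith
    then have "{vs ! i, vs ! ((i + 1) mod length vs)} \<subseteq> set vs" using i(1) by simp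
    then show ?thesis using i(2) by simp
  qed
  then have "v \<in> set vs" using assms(2) unfolding nodes_def by blast
  then obtain r where r: "r < length vs" "vs ! r = v" by (auto simp: in_set_conv_nth)
  have "cyclic_seq Z (length vs) (\<lambda>l. vs ! ((r + l) mod length vs))"
    using cyclic_seq_of_list[OF vs link cover r(1)] .
  moreover have "(\<lambda>l. vs ! ((r + l) mod length vs)) 0 = v" using r by simp
  ultimately show ?thesis using that by blast
qed

lemma cyclic_seq_eq_iff:
  assumes "cyclic_seq Z N x"
  shows "x a = x b \<longleftrightarrow> a mod N = b mod N"
proof -
  have N: "0 < N" "inj_on x {..<N}" and per: "x a = x (a mod N)" "x b = x (b mod N)"
    using assms unfolding cyclic_seq_def by auto
  have "x (a mod N) = x (b mod N) \<longleftrightarrow> a mod N = b mod N"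
    using N by (intro inj_on_eq_iff) auto
  then show ?thesis using per by simp
qed

lemma cyclic_seq_arc:
  assumes "cyclic_seq Z N x" and "(a, b) \<in> Z"
  obtains k where "{a, b} = {x k, x (Suc k)}"
  using assms unfolding cyclic_seq_def by blast

lemma cyclic_seq_Domain:
  assumes cyc: "cyclic_seq Z N x" and "a \<in> Domain Z"
  obtains l where "l < N" "a = x l"
proof -
  obtain b where "(a, b) \<in> Z" using assms(2) by blast
  then obtain k where k: "{a, b} = {x k, x (Suc k)}" using cyclic_seq_arc[OF cyc] by blast
  have "a \<in> {a, b}" by simp
  then have "a = x k \<or> a = x (Suc k)" unfolding k by simp
  then obtain m where "a = x m" by blast
  moreover have "x m = x (m mod N)" "m mod N < N" using cyc unfolding cyclic_seq_def by auto
  ultimately show ?thesis using that[of "m mod N"] by simp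
qed

lemma cyclic_seq_out_arc:
  assumes cyc: "cyclic_seq Z N x" and "0 < l" and "(x l, w) \<in> Z"
  shows "w = x (l - 1) \<or> w = x (Suc l)"
proof -
  obtain k where "{x l, w} = {x k, x (Suc k)}" using cyclic_seq_arc[OF cyc assms(3)] .
  then consider "x l = x k" "w = x (Suc k)" | "x l = x (Suc k)" "w = x k"
    unfolding doubleton_eq_iff by blast
  then show ?thesis
  proof cases
    case 1
    then have "l mod N = k mod N" using cyclic_seq_eq_iff[OF cyc] by simp
    then have "(1 + l) mod N = (1 + k) mod N" by (simp only: mod_add_left_cancel_nat)
    then have "x (Suc l) = x (Suc k)" using cyclic_seq_eq_iff[OF cyc] by simp
    then show ?thesis using 1 by simp
  next
    case 2
    then have "(1 + (l - 1)) mod N = (1 + k) mod N" using cyclic_seq_eq_iff[OF cyc] \<open>0 < l\<close> by simp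
    then have "(l - 1) mod N = k mod N" by (simp only: mod_add_left_cancel_nat)
    then have "x (l - 1) = x k" using cyclic_seq_eq_iff[OF cyc] by simp
    then show ?thesis using 2 by simp
  qed
qed

lemma cyclic_seq_U_nodes_iff:
  assumes cyc: "cyclic_seq Z N x" and "0 < l"
  shows "x l \<in> U_nodes Z \<longleftrightarrow> peak Z x l"
proof -
  let ?O = "{w. (x l, w) \<in> Z}"
  have sub: "?O \<subseteq> {x (l - 1), x (Suc l)}" using cyclic_seq_out_arc[OF cyc \<open>0 < l\<close>] by blast
  have "3 \<le> N" using cyc unfolding cyclic_seq_def by simp
  then have "((l - 1) + 2) mod N \<noteq> ((l - 1) + 0) mod N" by (simp only: mod_add_left_cancel_nat) simp
  then have "x (l - 1) \<noteq> x (Suc l)" using cyclic_seq_eq_iff[OF cyc] \<open>0 < l\<close> by simp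
  then have two: "card {x (l - 1), x (Suc l)} = 2" by simp
  have "2 \<le> card ?O \<longleftrightarrow> ?O = {x (l - 1), x (Suc l)}"
  proof
    assume "2 \<le> card ?O"
    moreover have "card ?O \<le> 2" using card_mono[OF _ sub] two by simp
    ultimately show "?O = {x (l - 1), x (Suc l)}" using card_subset_eq[OF _ sub] two by simp
  next
    assume "?O = {x (l - 1), x (Suc l)}"
    then show "2 \<le> card ?O" using two by simp
  qed
  also have "\<dots> \<longleftrightarrow> peak Z x l" using sub unfolding peak_def by blast
  finally show ?thesis unfolding U_nodes_def by simp
qed

lemma cyclic_seq_U_node_arcs:
  assumes cyc: "cyclic_seq Z N x" and "x 0 \<in> U_nodes Z"
  shows "(x 0, x 1) \<in> Z" "(x 0, x (N - 1)) \<in> Z" "x 1 \<noteq> x (N - 1)"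
proof -
  have N: "3 \<le> N" using cyc unfolding cyclic_seq_def by simp
  have "x N = x 0" "x (Suc N) = x 1" using cyclic_seq_eq_iff[OF cyc] N by (simp_all add: mod_Suc)
  then have "peak Z x N" using cyclic_seq_U_nodes_iff[OF cyc, of N] assms(2) N by simp
  then show "(x 0, x 1) \<in> Z" "(x 0, x (N - 1)) \<in> Z"
    using \<open>x N = x 0\<close> \<open>x (Suc N) = x 1\<close> unfolding peak_def by simp_all
  show "x 1 \<noteq> x (N - 1)" using cyclic_seq_eq_iff[OF cyc] N by simp
qed

lemma U_nodes_Domain: "U_nodes Z \<subseteq> Domain Z"
proof
  fix v assume "v \<in> U_nodes Z"
  then have "{w. (v, w) \<in> Z} \<noteq> {}" unfolding U_nodes_def by (auto simp del: Collect_empty_eq)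
  then show "v \<in> Domain Z" by blast
qed

lemma cyclic_seq_other_U_nodes:
  assumes cyc: "cyclic_seq Z N x"
  shows "U_nodes Z - {x 0} = x ` {l. 1 \<le> l \<and> l \<le> N - 1 \<and> peak Z x l}"
proof (rule equalityI)
  show "U_nodes Z - {x 0} \<subseteq> x ` {l. 1 \<le> l \<and> l \<le> N - 1 \<and> peak Z x l}"
  proof
    fix u assume u: "u \<in> U_nodes Z - {x 0}"
    then have "u \<in> Domain Z" using U_nodes_Domain by blast
    then obtain l where l: "l < N" "u = x l" by (rule cyclic_seq_Domain[OF cyc])
    then have "0 < l" using u by (cases l) auto
    then show "u \<in> x ` {l. 1 \<le> l \<and> l \<le> N - 1 \<and> peak Z x l}"
      using u l cyclic_seq_U_nodes_iff[OF cyc] by auto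
  qed
  show "x ` {l. 1 \<le> l \<and> l \<le> N - 1 \<and> peak Z x l} \<subseteq> U_nodes Z - {x 0}"
  proof
    fix u assume "u \<in> x ` {l. 1 \<le> l \<and> l \<le> N - 1 \<and> peak Z x l}"
    then obtain l where l: "1 \<le> l" "l \<le> N - 1" "peak Z x l" "u = x l" by blast
    have "x l \<in> U_nodes Z" using l cyclic_seq_U_nodes_iff[OF cyc] by simp
    moreover have "x l \<noteq> x 0" using l cyclic_seq_eq_iff[OF cyc] by simp
    ultimately show "u \<in> U_nodes Z - {x 0}" using l(4) by simp
  qed
qed

lemma cyclic_seq_other_U_nodes_meet:
  assumes cyc: "cyclic_seq Z N x" and dec: "\<forall>(a, b)\<in>Z. b \<noteq> {} \<and> b \<subseteq> a"
    and other: "U_nodes Z - {x 0} \<noteq> {}"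
  shows "overlap_connected (U_nodes Z - {x 0})"
    and "x 1 \<inter> \<Union>(U_nodes Z - {x 0}) \<noteq> {}"
    and "x (N - 1) \<inter> \<Union>(U_nodes Z - {x 0}) \<noteq> {}"
proof -
  have link: "\<forall>l. (x l, x (Suc l)) \<in> Z \<or> (x (Suc l), x l) \<in> Z"
    using cyc unfolding cyclic_seq_def by blast
  have ne: "\<forall>l. x l \<noteq> {}"
  proof
    fix l
    show "x l \<noteq> {}"
    proof (cases "(x l, x (Suc l)) \<in> Z")
      case True
      then show ?thesis using dec by blast
    next
      case False
      then have "(x (Suc l), x l) \<in> Z" using link by blast
      then show ?thesis using dec by blast
    qed
  qed
  have sub: "\<forall>(a, b)\<in>Z. b \<subseteq> a" using dec by blast
  note U' = cyclic_seq_other_U_nodes[OF cyc]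
  show "overlap_connected (U_nodes Z - {x 0})"
    unfolding U' by (rule zigzag_peaks_overlap_connected) (use link sub ne in auto)
  have peaks: "{l. 1 \<le> l \<and> l \<le> N - 1 \<and> peak Z x l} \<noteq> {}" using other unfolding U' by simp
  have link': "\<forall>l. 1 \<le> l \<and> l < N - 1 \<longrightarrow> (x l, x (Suc l)) \<in> Z \<or> (x (Suc l), x l) \<in> Z"
    using link by blast
  show "x 1 \<inter> \<Union>(U_nodes Z - {x 0}) \<noteq> {}" "x (N - 1) \<inter> \<Union>(U_nodes Z - {x 0}) \<noteq> {}"
    unfolding U' using zigzag_ends_meet_peaks[OF link' sub ne peaks] by simp_all
qed

lemma other_U_node_ancestor:
  assumes desc: "nodes Z \<subseteq> succ_set A T"
    and sep: "\<forall>t\<in>T. card (succ_set A {t} \<inter> U_nodes Z) \<le> 1"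
    and fin: "finite (U_nodes Z)" and u0: "u0 \<in> U_nodes Z" and v: "v \<in> U_nodes Z - {u0}"
  obtains t where "t \<in> T" "(t, v) \<in> A\<^sup>*" "(t, u0) \<notin> A\<^sup>*"
proof -
  have "v \<in> nodes Z" using v U_nodes_Domain unfolding nodes_def by blast
  then have "v \<in> succ_set A T" using desc by blast
  then obtain t where t: "t \<in> T" "(t, v) \<in> A\<^sup>*" unfolding succ_set_def by blast
  have "(t, u0) \<notin> A\<^sup>*"
  proof
    assume "(t, u0) \<in> A\<^sup>*"
    then have sub: "{u0, v} \<subseteq> succ_set A {t} \<inter> U_nodes Z"
      using t(2) u0 v unfolding succ_set_def by blast
    have "card {u0, v} \<le> card (succ_set A {t} \<inter> U_nodes Z)"
      using fin by (intro card_mono[OF _ sub]) simp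
    moreover have "card {u0, v} = 2" using v by (simp add: eq_commute[of u0])
    ultimately show False using sep t(1) by fastforce
  qed
  then show ?thesis using t that by blast
qed

section \<open>Linearizations\<close>

lemma linearizationD:
  assumes "linearization n M C"
  shows "\<forall>m\<in>M. m \<noteq> {} \<and> m \<subseteq> {1..n}" and "singletons n \<subseteq> M"
    and "\<forall>c\<in>C. c \<subseteq> M \<and> \<Union>c \<in> M"
    and "\<forall>m\<in>proper_monos n M. \<exists>c\<in>C. \<Union>c = m \<and> (\<forall>m'\<in>c. card m' < card m)"
  using assms unfolding linearization_def by simp_all

lemma simple_linearizationD:
  assumes "simple_linearization n M C"
  shows "linearization n M C" and "\<forall>m\<in>proper_monos n M. \<exists>!c. c \<in> C \<and> \<Union>c = m"
    and "card C = card (proper_monos n M)"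
  using assms unfolding simple_linearization_def by simp_all

lemma linearization_finite:
  assumes "linearization n M C"
  shows "finite M" "finite C"
proof -
  have M: "M \<subseteq> Pow {1..n}" and C: "C \<subseteq> Pow M" using assms unfolding linearization_def by auto
  from M show "finite M" by (rule finite_subset) simp
  from C show "finite C" by (rule finite_subset) (simp add: \<open>finite M\<close>)
qed

lemma linearization_proper_constraint:
  assumes "linearization n M C" and "m \<in> M" and "m \<notin> singletons n"
  obtains c where "c \<in> C" "\<Union>c = m" "\<forall>m'\<in>c. card m' < card m"
proof -
  have "m \<in> proper_monos n M" using assms(2,3) unfolding proper_monos_def by simp
  then show ?thesis using linearizationD(4)[OF assms(1)] that by blast
qed

lemma simple_linearization_resultant_proper:
  assumes s: "simple_linearization n M C" and c: "c \<in> C"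
  shows "\<Union>c \<in> proper_monos n M"
proof -
  let ?P = "proper_monos n M"
  let ?C' = "{c \<in> C. \<Union>c \<in> ?P}"
  note uniq = simple_linearizationD(2)[OF s]
  have "inj_on Union ?C'"
  proof (rule inj_onI)
    fix c1 c2 assume c12: "c1 \<in> ?C'" "c2 \<in> ?C'" "\<Union>c1 = \<Union>c2"
    have "\<exists>!c. c \<in> C \<and> \<Union>c = \<Union>c1" using uniq c12(1) by simp
    then obtain c0 where "\<forall>c. c \<in> C \<and> \<Union>c = \<Union>c1 \<longrightarrow> c = c0" unfolding Ex1_def by blast
    then show "c1 = c2" using c12 by blast
  qed
  moreover have "Union ` ?C' = ?P"
  proof
    show "?P \<subseteq> Union ` ?C'"
    proof
      fix m assume m: "m \<in> ?P"
      then obtain c where "c \<in> C" "\<Union>c = m" using ex1_implies_ex[OF bspec[OF uniq m]] by blast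
      then show "m \<in> Union ` ?C'" using m by blast
    qed
  qed blast
  ultimately have "card ?C' = card ?P" using card_image by fastforce
  then have "card ?C' = card C" using simple_linearizationD(3)[OF s] by simp
  moreover have "finite C" using linearization_finite(2)[OF simple_linearizationD(1)[OF s]] .
  ultimately have "?C' = C" by (intro card_subset_eq) auto
  then show ?thesis using c by blast
qed

lemma simple_linearization_constraint_unique:
  assumes s: "simple_linearization n M C" and "c \<in> C" "c' \<in> C" "\<Union>c = \<Union>c'"
  shows "c = c'"
proof -
  have "\<exists>!c''. c'' \<in> C \<and> \<Union>c'' = \<Union>c"
    using simple_linearizationD(2)[OF s] simple_linearization_resultant_proper[OF s \<open>c \<in> C\<close>] by simp
  then obtain c0 where "\<forall>c''. c'' \<in> C \<and> \<Union>c'' = \<Union>c \<longrightarrow> c'' = c0"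
    unfolding Ex1_def by blast
  then show ?thesis using assms(2-4) by blast
qed

lemma arcs_D_iff: "(a, b) \<in> arcs_D C \<longleftrightarrow> (\<exists>c\<in>C. a = \<Union>c \<and> b \<in> c)"
  unfolding arcs_D_def by blast

lemma arcs_D_in_M:
  assumes "linearization n M C" and "(a, b) \<in> arcs_D C"
  shows "a \<in> M" "b \<in> M"
  using linearizationD(3)[OF assms(1)] assms(2) unfolding arcs_D_iff by blast+

lemma arcs_D_from_resultant:
  assumes s: "simple_linearization n M C" and c: "c \<in> C" and "(\<Union>c, b) \<in> arcs_D C"
  shows "b \<in> c"
proof -
  obtain c' where c': "c' \<in> C" "\<Union>c = \<Union>c'" "b \<in> c'" using assms(3) unfolding arcs_D_iff by blast
  have "c' = c" using simple_linearization_constraint_unique[OF s c'(1) c] c'(2) by simp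
  then show ?thesis using c'(3) by simp
qed

lemma arcs_D_psubset:
  assumes s: "simple_linearization n M C" and "(a, b) \<in> arcs_D C"
  shows "b \<subset> a"
proof -
  obtain c where c: "c \<in> C" "a = \<Union>c" "b \<in> c" using assms(2) unfolding arcs_D_iff by blast
  have lin: "linearization n M C" using simple_linearizationD(1)[OF s] .
  have "a \<in> M" "a \<notin> singletons n"
    using simple_linearization_resultant_proper[OF s c(1)] c(2) unfolding proper_monos_def by auto
  then obtain c' where c': "c' \<in> C" "\<Union>c' = a" "\<forall>m'\<in>c'. card m' < card a"
    using linearization_proper_constraint[OF lin] by blast
  have "c' = c" using simple_linearization_constraint_unique[OF s c'(1) c(1)] c'(2) c(2) by simp
  then have "card b < card a" using c'(3) c(3) by blast
  moreover have "b \<subseteq> a" using c by blast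
  ultimately show ?thesis by auto
qed

lemma arcs_D_target:
  assumes s: "simple_linearization n M C" and ab: "(a, b) \<in> arcs_D C"
  shows "b \<noteq> {} \<and> b \<subseteq> a"
proof
  have lin: "linearization n M C" using simple_linearizationD(1)[OF s] .
  show "b \<noteq> {}" using arcs_D_in_M(2)[OF lin ab] linearizationD(1)[OF lin] by blast
  show "b \<subseteq> a" using arcs_D_psubset[OF s ab] by blast
qed

lemma arcs_D_rtrancl_subset:
  assumes "(a, b) \<in> (arcs_D C)\<^sup>*"
  shows "b \<subseteq> a"
proof (rule rtrancl_decreasing[OF _ assms])
  show "\<forall>(a, b)\<in>arcs_D C. b \<subseteq> a" unfolding arcs_D_def by blast
qed

lemma arcs_D_not_back:
  assumes "simple_linearization n M C" and "(u, a) \<in> arcs_D C"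
  shows "(a, u) \<notin> (arcs_D C)\<^sup>*"
  using arcs_D_psubset[OF assms] arcs_D_rtrancl_subset by blast

lemma linearization_reaches_singleton:
  assumes lin: "linearization n M C"
  shows "m \<in> M \<Longrightarrow> i \<in> m \<Longrightarrow> (m, {i}) \<in> (arcs_D C)\<^sup>*"
proof (induction m rule: measure_induct_rule[where f = card])
  case (less m)
  show ?case
  proof (cases "m \<in> singletons n")
    case True
    then show ?thesis using less.prems unfolding singletons_def by auto
  next
    case False
    then obtain c where c: "c \<in> C" "\<Union>c = m" "\<forall>m'\<in>c. card m' < card m"
      using linearization_proper_constraint[OF lin less.prems(1)] by blast
    then obtain m' where m': "m' \<in> c" "i \<in> m'" using less.prems(2) by blast
    have "m' \<in> M" using linearizationD(3)[OF lin] c(1) m'(1) by blast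
    then have "(m', {i}) \<in> (arcs_D C)\<^sup>*" using less.IH c(3) m' by blast
    moreover have "(m, m') \<in> arcs_D C" using c m'(1) unfolding arcs_D_iff by blast
    ultimately show ?thesis by simp
  qed
qed

lemma polytope_L_mono:
  assumes y: "y \<in> polytope_L M C" and "(a, b) \<in> (arcs_D C)\<^sup>*"
  shows "y a \<le> y b"
  using assms(2)
proof induction
  case (step b b')
  then obtain c where "c \<in> C" "b = \<Union>c" "b' \<in> c" unfolding arcs_D_iff by blast
  then have "y b \<le> y b'" using y unfolding polytope_L_def by blast
  then show ?case using step.IH by simp
qed simp

lemma polytope_L_eq_one:
  assumes lin: "linearization n M C" and y: "y \<in> polytope_L M C"
  shows "m \<in> M \<Longrightarrow> \<forall>i\<in>m. y {i} = 1 \<Longrightarrow> y m = 1"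
proof (induction m rule: measure_induct_rule[where f = card])
  case (less m)
  show ?case
  proof (cases "m \<in> singletons n")
    case True
    then show ?thesis using less.prems unfolding singletons_def by auto
  next
    case False
    then obtain c where c: "c \<in> C" "\<Union>c = m" "\<forall>m'\<in>c. card m' < card m"
      using linearization_proper_constraint[OF lin less.prems(1)] by blast
    have "y m' = 1" if "m' \<in> c" for m'
    proof -
      have "m' \<in> M" using linearizationD(3)[OF lin] c(1) that by blast
      moreover have "\<forall>i\<in>m'. y {i} = 1" using less.prems(2) c(2) that by blast
      ultimately show ?thesis using less.IH c(3) that by blast
    qed
    then have "(\<Sum>m'\<in>c. y m') = real (card c)" by simp
    moreover have "(\<Sum>m'\<in>c. y m') \<le> y m + real (card c) - 1"
      using y c(1,2) unfolding polytope_L_def by blast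
    moreover have "y m \<le> 1" using y less.prems(1) unfolding polytope_L_def by blast
    ultimately show ?thesis by simp
  qed
qed

section \<open>A fractional point of the polytope\<close>

definition half_point :: "monomial set \<Rightarrow> andc set \<Rightarrow> monomial \<Rightarrow> nat set \<Rightarrow> monomial \<Rightarrow> real" where
  "half_point M C u W m =
     (if m \<notin> M \<or> (m, u) \<in> (arcs_D C)\<^sup>* then 0 else if m \<inter> W = {} then 1 else 1 / 2)"

lemma half_point_eq_half:
  "m \<in> M \<Longrightarrow> (m, u) \<notin> (arcs_D C)\<^sup>* \<Longrightarrow> m \<inter> W \<noteq> {} \<Longrightarrow> half_point M C u W m = 1 / 2"
  unfolding half_point_def by simp

lemma half_point_antimono:
  assumes lin: "linearization n M C" and c: "c \<in> C" and m: "m \<in> c"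
  shows "half_point M C u W (\<Union>c) \<le> half_point M C u W m"
proof (cases "(\<Union>c, u) \<in> (arcs_D C)\<^sup>*")
  case True
  then show ?thesis unfolding half_point_def by simp
next
  case False
  have "(\<Union>c, m) \<in> arcs_D C" using c m unfolding arcs_D_iff by blast
  then have "(m, u) \<notin> (arcs_D C)\<^sup>*" using False converse_rtrancl_into_rtrancl by metis
  moreover have "m \<in> M" "m \<subseteq> \<Union>c" "\<Union>c \<in> M" using linearizationD(3)[OF lin] c m by blast+
  ultimately show ?thesis using False unfolding half_point_def by auto
qed

lemma half_point_constraint_member:
  assumes s: "simple_linearization n M C" and c: "c \<in> C" and "\<Union>c \<noteq> u"
  shows "\<exists>m\<in>c. half_point M C u W m \<le> half_point M C u W (\<Union>c)"
proof (cases "(\<Union>c, u) \<in> (arcs_D C)\<^sup>*")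
  case True
  then obtain z where z: "(\<Union>c, z) \<in> arcs_D C" "(z, u) \<in> (arcs_D C)\<^sup>*"
    using \<open>\<Union>c \<noteq> u\<close> by (cases rule: converse_rtranclE) auto
  then have "z \<in> c" using arcs_D_from_resultant[OF s c] by blast
  then show ?thesis using z(2) True unfolding half_point_def by auto
next
  case False
  have "\<Union>c \<in> M" "\<Union>c \<noteq> {}"
    using linearizationD(1,3)[OF simple_linearizationD(1)[OF s]] c by blast+
  show ?thesis
  proof (cases "\<Union>c \<inter> W = {}")
    case True
    obtain m where "m \<in> c" using \<open>\<Union>c \<noteq> {}\<close> by blast
    then show ?thesis using True False \<open>\<Union>c \<in> M\<close> unfolding half_point_def by auto
  next
    case meet: False
    then obtain m where "m \<in> c" "m \<inter> W \<noteq> {}" by blast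
    then show ?thesis using meet False \<open>\<Union>c \<in> M\<close> unfolding half_point_def by auto
  qed
qed

lemma half_point_in_polytope:
  assumes s: "simple_linearization n M C"
    and fork: "(u, a) \<in> arcs_D C" "(u, b) \<in> arcs_D C" "a \<noteq> b"
    and meets: "a \<inter> W \<noteq> {}" "b \<inter> W \<noteq> {}"
  shows "half_point M C u W \<in> polytope_L M C"
proof -
  let ?y = "half_point M C u W"
  have lin: "linearization n M C" using simple_linearizationD(1)[OF s] .
  have le1: "?y m \<le> 1" for m unfolding half_point_def by simp
  \<comment> \<open>The constraint with resultant \<open>u\<close> is the only one whose resultant has value \<open>0\<close> while
      none of its members does; it holds because its members \<open>a\<close> and \<open>b\<close> have value \<open>1/2\<close>.\<close>
  have sum: "(\<Sum>m\<in>c. ?y m) \<le> ?y (\<Union>c) + real (card c) - 1" if c: "c \<in> C" for c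
  proof -
    have "c \<subseteq> M" using linearizationD(3)[OF lin] c by blast
    then have fin: "finite c" using linearization_finite(1)[OF lin] finite_subset by blast
    have c_le1: "\<forall>m\<in>c. ?y m \<le> 1" using le1 by blast
    show ?thesis
    proof (cases "\<Union>c = u")
      case True
      then have "a \<in> c" "b \<in> c" using arcs_D_from_resultant[OF s c] fork(1,2) by auto
      moreover have "?y a = 1 / 2" "?y b = 1 / 2" "?y (\<Union>c) = 0"
        using arcs_D_in_M[OF lin] arcs_D_not_back[OF s] fork meets True
        unfolding half_point_def by auto
      ultimately show ?thesis using sum_le_card_minus_two[OF fin c_le1 _ _ fork(3)] by simp
    next
      case False
      then obtain m where "m \<in> c" "?y m \<le> ?y (\<Union>c)"
        using half_point_constraint_member[OF s c] by blast
      then show ?thesis using sum_le_card_minus_one[OF fin c_le1] by fastforce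
    qed
  qed
  show ?thesis
    unfolding polytope_L_def using half_point_antimono[OF lin] sum le1
    by (auto simp: half_point_def)
qed

section \<open>Non-integrality of the projection\<close>

lemma proj_polytope_point:
  assumes lin: "linearization n M C" and T: "T \<subseteq> M"
    and v: "v \<in> proj (singletons n \<union> T) (polytope_L M C)"
  shows proj_polytope_singleton: "i \<in> {1..n} \<Longrightarrow> 0 \<le> v {i} \<and> v {i} \<le> 1"
    and proj_polytope_nonneg: "t \<in> T \<Longrightarrow> 0 \<le> v t"
    and proj_polytope_le_singleton: "t \<in> T \<Longrightarrow> w \<in> t \<Longrightarrow> v t \<le> v {w}"
    and proj_polytope_eq_one: "t \<in> T \<Longrightarrow> \<forall>i\<in>t. v {i} = 1 \<Longrightarrow> v t = 1"
proof -
  obtain y where y: "y \<in> polytope_L M C"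
    and v_def: "v = (\<lambda>m. if m \<in> singletons n \<union> T then y m else 0)"
    using v unfolding proj_def by blast
  have v_y: "\<forall>m\<in>singletons n \<union> T. v m = y m" unfolding v_def by simp
  have single: "{i} \<in> singletons n" "{i} \<in> M" if "i \<in> {1..n}" for i
    using linearizationD(2)[OF lin] that unfolding singletons_def by auto
  have member: "t \<in> M" "t \<subseteq> {1..n}" if "t \<in> T" for t
    using linearizationD(1)[OF lin] T that by auto
  have y_bounds: "0 \<le> y m" "y m \<le> 1" if "m \<in> M" for m
    using y that unfolding polytope_L_def by auto
  show "0 \<le> v {i} \<and> v {i} \<le> 1" if "i \<in> {1..n}" for i
    using v_y single[OF that] y_bounds by simp
  show "0 \<le> v t" if "t \<in> T" for t
    using v_y that member y_bounds by simp
  show "v t \<le> v {w}" if "t \<in> T" "w \<in> t" for t w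
  proof -
    have "(t, {w}) \<in> (arcs_D C)\<^sup>*"
      using linearization_reaches_singleton[OF lin] member(1)[OF that(1)] that(2) by blast
    then have "y t \<le> y {w}" by (rule polytope_L_mono[OF y])
    then show ?thesis using v_y that single member(2)[OF that(1)] by auto
  qed
  show "v t = 1" if "t \<in> T" "\<forall>i\<in>t. v {i} = 1" for t
  proof -
    have "y {i} = 1" if "i \<in> t" for i
    proof -
      have "i \<in> {1..n}" using member(2) \<open>t \<in> T\<close> \<open>i \<in> t\<close> by blast
      then have "v {i} = y {i}" using v_y single by blast
      then show ?thesis using \<open>\<forall>i\<in>t. v {i} = 1\<close> \<open>i \<in> t\<close> by simp
    qed
    then have "y t = 1" using polytope_L_eq_one[OF lin y member(1)[OF that(1)]] by blast
    then show ?thesis using v_y that(1) by simp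
  qed
qed

lemma integral_proj_point_vanishes:
  assumes lin: "linearization n M C" and T: "T \<subseteq> M"
    and v: "v \<in> proj (singletons n \<union> T) (polytope_L M C)" "\<forall>a. v a \<in> \<int>"
    and conn: "overlap_connected \<U>" and W: "\<Union>\<U> \<subseteq> {1..n}"
    and one: "\<forall>i\<in>{1..n} - \<Union>\<U>. v {i} = 1"
    and const: "\<forall>u\<in>\<U>. \<forall>w\<in>u. \<forall>w'\<in>u. v {w} = v {w'}"
    and t0: "t0 \<in> T" "v t0 = 0"
    and w: "w \<in> \<Union>\<U>"
  shows "v {w} = 0"
proof (rule ccontr)
  \<comment> \<open>otherwise \<open>v\<close> is \<open>1\<close> on all of \<open>\<Union>\<U>\<close>, hence on all variables of \<open>t0\<close>, which forces \<open>v t0 = 1\<close>\<close>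
  assume "v {w} \<noteq> 0"
  moreover have "w \<in> {1..n}" using W w by blast
  then have "0 \<le> v {w} \<and> v {w} \<le> 1" by (rule proj_polytope_singleton[OF lin T v(1)])
  ultimately have w1: "v {w} = 1" using Ints_between_0_1[of "v {w}"] v(2) by simp
  have "v {i} = 1" if i: "i \<in> t0" for i
  proof (cases "i \<in> \<Union>\<U>")
    case True
    then show ?thesis using overlap_connected_const[OF conn const True w] w1 by simp
  next
    case False
    moreover have "t0 \<subseteq> {1..n}" using linearizationD(1)[OF lin] T t0(1) by blast
    ultimately show ?thesis using one i by blast
  qed
  then have "v t0 = 1" using proj_polytope_eq_one[OF lin T v(1) t0(1)] by blast
  then show False using t0(2) by simp
qed

lemma convex_comb_support_vanishes:
  fixes c :: "(monomial \<Rightarrow> real) \<Rightarrow> real"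
  assumes lin: "linearization n M C" and T: "T \<subseteq> M"
    and F: "finite F" "F \<subseteq> {z \<in> proj (singletons n \<union> T) (polytope_L M C). \<forall>a. z a \<in> \<int>}"
      "\<forall>z\<in>F. 0 \<le> c z" "(\<Sum>z\<in>F. c z) = 1"
    and conn: "overlap_connected \<U>" and W: "\<Union>\<U> \<subseteq> {1..n}"
    and avg_single: "\<forall>i\<in>{1..n}. (\<Sum>z\<in>F. c z * z {i}) = (if i \<in> \<Union>\<U> then 1 / 2 else 1)"
    and t0: "t0 \<in> T" "(\<Sum>z\<in>F. c z * z t0) = 0"
    and cover: "\<forall>u\<in>\<U>. \<exists>t\<in>T. u \<subseteq> t \<and> (\<Sum>z\<in>F. c z * z t) = 1 / 2"
    and v: "v \<in> F" "0 < c v" and w: "w \<in> \<Union>\<U>"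
  shows "v {w} = 0"
proof -
  have F_proj: "z \<in> proj (singletons n \<union> T) (polytope_L M C)" if "z \<in> F" for z
    using F(2) that by blast
  have tight: "f v = g v"
    if "\<forall>z\<in>F. f z \<le> g z" "(\<Sum>z\<in>F. c z * f z) = (\<Sum>z\<in>F. c z * g z)"
    for f g :: "(monomial \<Rightarrow> real) \<Rightarrow> real"
    using convex_comb_tight[of F c f g v] F(1) F(3) that v by blast
  show ?thesis
  proof (rule integral_proj_point_vanishes[OF lin T F_proj[OF v(1)] _ conn W _ _ t0(1) _ w])
    show "\<forall>a. v a \<in> \<int>" using F(2) v(1) by blast
    show "\<forall>i\<in>{1..n} - \<Union>\<U>. v {i} = 1"
    proof
      fix i assume i: "i \<in> {1..n} - \<Union>\<U>"
      have "\<forall>z\<in>F. z {i} \<le> 1" using proj_polytope_singleton[OF lin T F_proj] i by blast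
      moreover have "(\<Sum>z\<in>F. c z * z {i}) = (\<Sum>z\<in>F. c z * 1)" using F(4) avg_single i by simp
      ultimately show "v {i} = 1" using tight[where f = "\<lambda>z. z {i}" and g = "\<lambda>_. 1"] by simp
    qed
    show "\<forall>u\<in>\<U>. \<forall>k\<in>u. \<forall>k'\<in>u. v {k} = v {k'}"
    proof (intro ballI)
      fix u k k' assume u: "u \<in> \<U>" and "k \<in> u" "k' \<in> u"
      obtain t where t: "t \<in> T" "u \<subseteq> t" "(\<Sum>z\<in>F. c z * z t) = 1 / 2" using cover u by blast
      have "v t = v {j}" if "j \<in> u" for j
      proof -
        have j: "j \<in> t" "j \<in> \<Union>\<U>" "j \<in> {1..n}" using t(2) u W that by auto
        have "\<forall>z\<in>F. z t \<le> z {j}" using proj_polytope_le_singleton[OF lin T F_proj t(1) j(1)] by blast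
        moreover have "(\<Sum>z\<in>F. c z * z t) = (\<Sum>z\<in>F. c z * z {j})" using t(3) avg_single j by simp
        ultimately show ?thesis using tight[where f = "\<lambda>z. z t" and g = "\<lambda>z. z {j}"] by simp
      qed
      from this[OF \<open>k \<in> u\<close>] this[OF \<open>k' \<in> u\<close>] show "v {k} = v {k'}" by simp
    qed
    have "\<forall>z\<in>F. 0 \<le> z t0" using proj_polytope_nonneg[OF lin T F_proj t0(1)] by blast
    moreover have "(\<Sum>z\<in>F. c z * 0) = (\<Sum>z\<in>F. c z * z t0)" using t0(2) by simp
    ultimately show "v t0 = 0" using tight[where f = "\<lambda>_. 0" and g = "\<lambda>z. z t0"] by simp
  qed
qed

lemma proj_polytope_not_integral:
  assumes lin: "linearization n M C" and T: "T \<subseteq> M"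
    and y: "y \<in> polytope_L M C"
    and conn: "overlap_connected \<U>" and W_ne: "\<Union>\<U> \<noteq> {}"
    and y_single: "\<forall>i\<in>{1..n}. y {i} = (if i \<in> \<Union>\<U> then 1 / 2 else 1)"
    and t0: "t0 \<in> T" "y t0 = 0"
    and cover: "\<forall>u\<in>\<U>. \<exists>t\<in>T. u \<subseteq> t \<and> y t = 1 / 2"
  shows "\<not> integral_polytope (proj (singletons n \<union> T) (polytope_L M C))"
proof
  define Q where "Q = proj (singletons n \<union> T) (polytope_L M C)"
  define q where "q = (\<lambda>m. if m \<in> singletons n \<union> T then y m else 0)"
  assume "integral_polytope (proj (singletons n \<union> T) (polytope_L M C))"
  then have "Q = conv_hull {x \<in> Q. \<forall>a. x a \<in> \<int>}" unfolding integral_polytope_def Q_def .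
  moreover have "q \<in> Q" unfolding Q_def proj_def q_def by (rule image_eqI[OF refl y])
  ultimately have "q \<in> conv_hull {x \<in> Q. \<forall>a. x a \<in> \<int>}" by simp
  then obtain F c where F: "finite F" "F \<subseteq> {x \<in> Q. \<forall>a. x a \<in> \<int>}" "\<forall>v\<in>F. 0 \<le> c v"
    "(\<Sum>v\<in>F. c v) = 1" "\<forall>a. q a = (\<Sum>v\<in>F. c v * v a)"
    unfolding conv_hull_def by blast
  have W: "\<Union>\<U> \<subseteq> {1..n}"
  proof
    fix w assume "w \<in> \<Union>\<U>"
    then obtain u t where "u \<in> \<U>" "w \<in> u" "t \<in> T" "u \<subseteq> t" using cover by blast
    then show "w \<in> {1..n}" using T linearizationD(1)[OF lin] by blast
  qed
  have avg: "(\<Sum>v\<in>F. c v * v m) = y m" if "m \<in> singletons n \<union> T" for m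
  proof -
    have "(\<Sum>v\<in>F. c v * v m) = q m" using F(5) by simp
    also have "\<dots> = y m" using that unfolding q_def by simp
    finally show ?thesis .
  qed
  have avg_single: "(\<Sum>v\<in>F. c v * v {i}) = (if i \<in> \<Union>\<U> then 1 / 2 else 1)" if "i \<in> {1..n}" for i
  proof -
    have "{i} \<in> singletons n" using that unfolding singletons_def by blast
    then show ?thesis using avg[of "{i}"] y_single that by simp
  qed
  have vanish: "v {w} = 0" if "v \<in> F" "0 < c v" "w \<in> \<Union>\<U>" for v w
  proof (rule convex_comb_support_vanishes[OF lin T F(1) _ F(3,4) conn W _ t0(1) _ _ that])
    show "F \<subseteq> {z \<in> proj (singletons n \<union> T) (polytope_L M C). \<forall>a. z a \<in> \<int>}"
      using F(2) unfolding Q_def .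
    show "\<forall>i\<in>{1..n}. (\<Sum>v\<in>F. c v * v {i}) = (if i \<in> \<Union>\<U> then 1 / 2 else 1)"
      using avg_single by blast
    show "(\<Sum>v\<in>F. c v * v t0) = 0" using avg[of t0] t0 by simp
    show "\<forall>u\<in>\<U>. \<exists>t\<in>T. u \<subseteq> t \<and> (\<Sum>v\<in>F. c v * v t) = 1 / 2"
    proof
      fix u assume "u \<in> \<U>"
      then obtain t where "t \<in> T" "u \<subseteq> t" "y t = 1 / 2" using cover by blast
      then show "\<exists>t\<in>T. u \<subseteq> t \<and> (\<Sum>v\<in>F. c v * v t) = 1 / 2" using avg[of t] by auto
    qed
  qed
  obtain w where w: "w \<in> \<Union>\<U>" using W_ne by blast
  then have w_n: "w \<in> {1..n}" using W by blast
  have "(\<Sum>v\<in>F. c v * v {w}) = 0"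
  proof (rule sum.neutral, rule ballI)
    fix v assume "v \<in> F"
    then show "c v * v {w} = 0" using vanish[OF _ _ w] F(3) by (cases "c v = 0") auto
  qed
  moreover have "(\<Sum>v\<in>F. c v * v {w}) = 1 / 2" using avg_single[OF w_n] w by simp
  ultimately show False by simp
qed

lemma proj_polytope_not_integral_at_fork:
  assumes s: "simple_linearization n M C" and T: "T \<subseteq> M"
    and fork: "(u, a) \<in> arcs_D C" "(u, b) \<in> arcs_D C" "a \<noteq> b"
    and conn: "overlap_connected \<U>" "{} \<notin> \<U>"
    and meets: "a \<inter> \<Union>\<U> \<noteq> {}" "b \<inter> \<Union>\<U> \<noteq> {}"
    and t0: "t0 \<in> T" "(t0, u) \<in> (arcs_D C)\<^sup>*"
    and cover: "\<forall>v\<in>\<U>. \<exists>t\<in>T. (t, v) \<in> (arcs_D C)\<^sup>* \<and> (t, u) \<notin> (arcs_D C)\<^sup>*"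
  shows "\<not> integral_polytope (proj (singletons n \<union> T) (polytope_L M C))"
proof (rule proj_polytope_not_integral[OF _ T half_point_in_polytope[OF s fork meets] conn(1) _ _ t0(1)])
  show lin: "linearization n M C" using simple_linearizationD(1)[OF s] .
  show "\<Union>\<U> \<noteq> {}" using meets(1) by blast
  show "half_point M C u (\<Union>\<U>) t0 = 0" using t0 T unfolding half_point_def by auto
  show "\<forall>i\<in>{1..n}. half_point M C u (\<Union>\<U>) {i} = (if i \<in> \<Union>\<U> then 1 / 2 else 1)"
  proof
    fix i assume i: "i \<in> {1..n}"
    have "({i}, u) \<notin> (arcs_D C)\<^sup>*"
    proof
      assume "({i}, u) \<in> (arcs_D C)\<^sup>*"
      then have "u \<subseteq> {i}" by (rule arcs_D_rtrancl_subset)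
      with arcs_D_psubset[OF s fork(1)] have "a \<subset> {i}" by (rule psubset_subset_trans)
      moreover have "a \<noteq> {}" using arcs_D_in_M(2)[OF lin fork(1)] linearizationD(1)[OF lin] by blast
      ultimately show False by (auto simp: psubset_eq subset_singleton_iff)
    qed
    moreover have "{i} \<in> M" using linearizationD(2)[OF lin] i unfolding singletons_def by blast
    ultimately show "half_point M C u (\<Union>\<U>) {i} = (if i \<in> \<Union>\<U> then 1 / 2 else 1)"
      unfolding half_point_def by auto
  qed
  show "\<forall>v\<in>\<U>. \<exists>t\<in>T. v \<subseteq> t \<and> half_point M C u (\<Union>\<U>) t = 1 / 2"
  proof
    fix v assume v: "v \<in> \<U>"
    then obtain t where t: "t \<in> T" "(t, v) \<in> (arcs_D C)\<^sup>*" "(t, u) \<notin> (arcs_D C)\<^sup>*"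
      using cover by blast
    have "v \<subseteq> t" using t(2) by (rule arcs_D_rtrancl_subset)
    have "v \<noteq> {}" using v conn(2) by auto
    then obtain w where "w \<in> v" by blast
    then have "w \<in> t \<inter> \<Union>\<U>" using \<open>v \<subseteq> t\<close> v by blast
    then have "half_point M C u (\<Union>\<U>) t = 1 / 2"
      using half_point_eq_half[of t M u C "\<Union>\<U>"] t(1,3) T by blast
    then show "\<exists>t\<in>T. v \<subseteq> t \<and> half_point M C u (\<Union>\<U>) t = 1 / 2"
      using t(1) \<open>v \<subseteq> t\<close> by blast
  qed
qed

theorem lemma3p14:
  fixes n :: nat and M :: "nat set set" and C :: "nat set set set"
    and T :: "nat set set" and Z :: "(nat set \<times> nat set) set"
  assumes simple: "simple_linearization n M C"
    and T_sub: "T \<subseteq> proper_monos n M"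
    and Z_sub: "Z \<subseteq> arcs_D C"
    and U_card: "card (U_nodes Z) > 1"
    and a: "undirected_cycle Z"
    and b: "nodes Z \<subseteq> succ_set (arcs_D C) T"
    and c: "\<forall>s\<in>singletons n. \<forall>t\<in>T. \<forall>p q. dpath (arcs_D C) t s p \<and> dpath (arcs_D C) t s q \<longrightarrow> p = q"
    and d: "\<forall>s\<in>singletons n. card (pred_set (arcs_D C) {s} \<inter> L_nodes Z) \<le> 1"
    and e: "\<forall>t\<in>T. card (succ_set (arcs_D C) {t} \<inter> U_nodes Z) \<le> 1"
  shows "\<not> integral_polytope (proj (singletons n \<union> T) (polytope_L M C))"
proof -
  have T: "T \<subseteq> M" using T_sub unfolding proper_monos_def by blast
  have arcs: "\<forall>(a, b)\<in>Z. b \<noteq> {} \<and> b \<subseteq> a" using Z_sub arcs_D_target[OF simple] by blast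
  have finU: "finite (U_nodes Z)" using U_card by (intro card_ge_0_finite) simp
  obtain u0 where u0: "u0 \<in> U_nodes Z" and other: "U_nodes Z - {u0} \<noteq> {}"
    using U_card by (rule card_gt_1_obtains)
  have u0_node: "u0 \<in> nodes Z" using u0 U_nodes_Domain unfolding nodes_def by blast
  obtain N x where cyc: "cyclic_seq Z N x" "x 0 = u0" by (rule undirected_cycle_cyclic_seq[OF a u0_node])
  note meet = cyclic_seq_other_U_nodes_meet[OF cyc(1) arcs, unfolded cyc(2), OF other]
  have "x 0 \<in> U_nodes Z" using u0 cyc(2) by simp
  note fork_Z = cyclic_seq_U_node_arcs[OF cyc(1) this, unfolded cyc(2)]
  have fork: "(u0, x 1) \<in> arcs_D C" "(u0, x (N - 1)) \<in> arcs_D C" "x 1 \<noteq> x (N - 1)"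
    using fork_Z Z_sub by blast+
  have "u0 \<in> succ_set (arcs_D C) T" using b u0_node by blast
  then obtain t0 where t0: "t0 \<in> T" "(t0, u0) \<in> (arcs_D C)\<^sup>*" unfolding succ_set_def by blast
  show ?thesis
  proof (rule proj_polytope_not_integral_at_fork[OF simple T fork meet(1) _ meet(2,3) t0])
    show "{} \<notin> U_nodes Z - {u0}" using U_nodes_Domain arcs by blast
    show "\<forall>v\<in>U_nodes Z - {u0}. \<exists>t\<in>T. (t, v) \<in> (arcs_D C)\<^sup>* \<and> (t, u0) \<notin> (arcs_D C)\<^sup>*"
      using other_U_node_ancestor[OF b e finU u0] by blast
  qed
qed

end
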